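(* Let $k\ge2$ and $n\le0$, and write $q=q_{n,k}$, $r=r_{n,k}$. (a) If $r=0$ and $q\ge2$ (equivalently $|n|\ge2k-1$), then the coefficient of $x^{|n|+1-2k}$ in $\mathcal{F}_{n,k}(x)$ is $2q-3$ when $k=2$ and $q-1$ when $k\ge3$. (b) If $1\le r\le k-1$ and $q\ge r+1$ (equivalently $|n|\ge k(r+1)-1$), then the coefficient of $x^{|n|+1-k(r+1)}$ in $\mathcal{F}_{n,k}(x)$ is $(-1)^r(r+1)\binom{q-1}{r}$. In both cases the exponent in question is the degree of $\mathcal{F}_{n,k}$ minus $k$. No monomial of $\mathcal{F}_{n,k}$ has exponent strictly between this exponent and the degree.
   Context: For $k\ge2$, the polynomials $\mathcal{F}_{n,k}(x)\in\mathbb{Z}[x]$ ($n\in\mathbb{Z}$) are defined by $\mathcal{F}_{1,k}=1$, $\mathcal{F}_{n,k}=0$ for $n=0,-1,\dots,-(k-2)$, and $\mathcal{F}_{n,k}(x)=\sum_{j=1}^{k}x^{k-j}\mathcal{F}_{n-j,k}(x)$ for all $n\in\mathbb{Z}$. This recurrence is used upwards for $n\ge2$, and downwards for $n\le-(k-1)$ as $\mathcal{F}_{n,k}=\mathcal{F}_{n+k,k}-\sum_{j=1}^{k-1}x^j\mathcal{F}_{n+j,k}$. For $n\le0$, set $q_{n,k}=\lfloor(|n|+1)/k\rfloor$ and let $r_{n,k}\in\{0,\dots,k-1\}$ be the residue of $|n|+1$ modulo $k$. Then $|n|+1=kq_{n,k}+r_{n,k}$. *)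

theory Defs
  imports "HOL-Computational_Algebra.Polynomial"
begin

text \<open>The polynomials F_{n,k}(x) for n an integer, k >= 2 (junk value 0 for k < 2).\<close>

function Fpoly :: "nat \<Rightarrow> int \<Rightarrow> int poly" where
  "Fpoly k n =
    (if k < 2 then 0
     else if n = 1 then 1
     else if 1 - int k < n \<and> n \<le> 0 then 0
     else if n \<ge> 2 then (\<Sum>j\<in>{1..k}. monom 1 (k - j) * Fpoly k (n - int j))
     else Fpoly k (n + int k) - (\<Sum>j\<in>{1..k-1}. monom 1 j * Fpoly k (n + int j)))"
  by auto
termination
  by (relation "measure (\<lambda>(k, n). if k < 2 then 0 else if n \<ge> 2 then nat (n + int k)
                   else if 1 - int k < n then 0 else nat (- n))") auto

end

theory Submission
  imports Defs
begin

text \<open>Write P_m = F_{1-m,k} (Fneg k m below). Two consecutive instances of the downward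
  recurrence combine to P_m = (1 + x^k) P_{m-k} - x P_{m-k-1}, so every monomial of P_m (m > 0)
  has exponent m - k t with t \<ge> 1. The coefficient c_t(j) of x^j in P_{j+kt} then obeys
  c_t(j) = c_t(j - k) + c_{t-1}(j) - c_{t-1}(j - 1); summing along a residue class modulo k and
  using the hockey-stick identity gives c_t(k a + b) = (-1)^b C(t, b) C(t - 1 + a, a) for t \<le> k,
  except for t = k, b = 0. For m = k Q + r the factor C(t, r) kills all depths t < r, so the top
  monomial sits at depth max 1 r, and the coefficient one depth lower is the one in the theorem.\<close>

declare Fpoly.simps [simp del]

abbreviation Fneg :: "nat \<Rightarrow> nat \<Rightarrow> int poly" where
  "Fneg k m \<equiv> Fpoly k (1 - int m)"

lemma Fneg_0: "k \<ge> 2 \<Longrightarrow> Fneg k 0 = 1"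
  by (subst Fpoly.simps) simp

lemma Fneg_eq_0: "k \<ge> 2 \<Longrightarrow> 1 \<le> m \<Longrightarrow> m < k \<Longrightarrow> Fneg k m = 0"
  by (subst Fpoly.simps) auto

lemma Fpoly_downward:
  assumes "k \<ge> 2" "n \<le> 1 - int k"
  shows "Fpoly k n = Fpoly k (n + int k) - (\<Sum>j\<in>{1..k-1}. monom 1 j * Fpoly k (n + int j))"
  using assms by (subst Fpoly.simps) auto

lemma Fneg_k:
  assumes "k \<ge> 2"
  shows "Fneg k k = 1"
proof -
  have "Fpoly k (1 - int k + int j) = 0" if "j \<in> {1..k-1}" for j
    using assms that by (subst Fpoly.simps) auto
  then show ?thesis
    using Fpoly_downward[OF assms, of "1 - int k"] Fneg_0[OF assms] by simp
qed

lemma sum_atLeastAtMost_pred_plus_last: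
  fixes f :: "nat \<Rightarrow> 'a::comm_monoid_add"
  assumes "k \<ge> 1"
  shows "(\<Sum>j\<in>{1..k-1}. f j) + f k = f 1 + (\<Sum>j\<in>{1..k-1}. f (Suc j))"
  using assms
proof (induction k rule: nat_induct_at_least)
  case (Suc k)
  then show ?case by (cases k) (simp_all add: add_ac)
qed simp

lemma Fneg_rec:
  assumes k: "k \<ge> 2" and m: "m \<ge> k + 1"
  shows "Fneg k m = (monom 1 k + 1) * Fneg k (m - k) - monom 1 1 * Fneg k (m - k - 1)"
proof -
  define n where "n = 1 - int m"
  define g where "g j = Fpoly k (n + int j)" for j
  define S where "S = (\<Sum>j\<in>{1..k-1}. monom 1 j * g j)"
  define T where "T = (\<Sum>j\<in>{1..k-1}. monom 1 j * g (Suc j))"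
  have at_n: "g 0 = g k - S"
    using Fpoly_downward[OF k, of n] m unfolding S_def g_def n_def by simp
  have at_Suc_n: "g 1 = g (Suc k) - T"
    using Fpoly_downward[OF k, of "n + 1"] m unfolding T_def g_def n_def by (simp add: algebra_simps)
  have "S + monom 1 k * g k = monom 1 1 * g 1 + monom 1 1 * (g (Suc k) - g 1)"
    using sum_atLeastAtMost_pred_plus_last[of k "\<lambda>j. monom 1 j * g j"] k
    unfolding S_def at_Suc_n T_def by (simp add: sum_distrib_left mult_monom flip: mult.assoc)
  then have "g 0 = (monom 1 k + 1) * g k - monom 1 1 * g (Suc k)"
    unfolding at_n by (simp add: algebra_simps)
  moreover have "g k = Fneg k (m - k)" "g (Suc k) = Fneg k (m - k - 1)"
    using m unfolding g_def n_def by (simp_all add: of_nat_diff algebra_simps)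
  ultimately show ?thesis unfolding g_def n_def by simp
qed

lemma coeff_Fneg_rec:
  assumes "k \<ge> 2" "m \<ge> k + 1"
  shows "coeff (Fneg k m) e =
           (if k \<le> e then coeff (Fneg k (m - k)) (e - k) else 0) + coeff (Fneg k (m - k)) e
           - (if e = 0 then 0 else coeff (Fneg k (m - k - 1)) (e - 1))"
  using Fneg_rec[OF assms] by (simp add: distrib_right coeff_monom_mult)

lemma coeff_Fneg_nonzeroD:
  assumes k: "k \<ge> 2" and "coeff (Fneg k m) e \<noteq> 0"
  shows "\<exists>t. m = e + k * t \<and> (m = 0 \<or> t \<ge> 1)"
  using assms(2)
proof (induction m arbitrary: e rule: less_induct)
  case (less m)
  consider "m = 0" | "1 \<le> m" "m < k" | "m = k" | "m \<ge> k + 1" by linarith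
  then show ?case
  proof cases
    case 1
    then have "e = 0" using less.prems Fneg_0[OF k] by (simp add: coeff_1 split: if_splits)
    with 1 show ?thesis by simp
  next
    case 2
    then show ?thesis using less.prems Fneg_eq_0[OF k] by simp
  next
    case 3
    then have "e = 0" using less.prems Fneg_k[OF k] by (simp add: coeff_1 split: if_splits)
    with 3 show ?thesis by (intro exI[of _ 1]) simp
  next
    case m: 4
    have "(k \<le> e \<and> coeff (Fneg k (m - k)) (e - k) \<noteq> 0) \<or> coeff (Fneg k (m - k)) e \<noteq> 0
      \<or> (e \<noteq> 0 \<and> coeff (Fneg k (m - k - 1)) (e - 1) \<noteq> 0)"
      using less.prems unfolding coeff_Fneg_rec[OF k m, of e] by (auto split: if_splits)
    then consider (shift) "k \<le> e" "coeff (Fneg k (m - k)) (e - k) \<noteq> 0"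
      | (same) "coeff (Fneg k (m - k)) e \<noteq> 0"
      | (down) "e \<noteq> 0" "coeff (Fneg k (m - k - 1)) (e - 1) \<noteq> 0"
      by blast
    then show ?thesis
    proof cases
      case shift
      from m k have "m - k < m" by simp
      from less.IH[OF this shift(2)] obtain t where "m - k = e - k + k * t" "m - k = 0 \<or> t \<ge> 1"
        by blast
      with shift m have "m = e + k * t" "t \<ge> 1" by linarith+
      then show ?thesis by (intro exI[of _ t]) simp
    next
      case same
      from m k have "m - k < m" by simp
      from less.IH[OF this same] obtain t where "m - k = e + k * t" by blast
      with m have "m = e + k * Suc t" unfolding mult_Suc_right by linarith
      then show ?thesis by (intro exI[of _ "Suc t"]) simp
    next
      case down
      from m k have "m - k - 1 < m" by simp
      from less.IH[OF this down(2)] obtain t where "m - k - 1 = e - 1 + k * t" by blast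
      with m down have "m = e + k * Suc t" unfolding mult_Suc_right by linarith
      then show ?thesis by (intro exI[of _ "Suc t"]) simp
    qed
  qed
qed

text \<open>By \<open>coeff_Fneg_nonzeroD\<close> the nonzero coefficients of \<open>Fneg k m\<close> sit at
  exponents \<open>m - k * t\<close>; \<open>depth_coeff k t\<close> collects those at depth \<open>t\<close>.\<close>
definition depth_coeff :: "nat \<Rightarrow> nat \<Rightarrow> nat \<Rightarrow> int" where
  "depth_coeff k t j = coeff (Fneg k (j + k * t)) j"

lemma depth_coeff_0:
  assumes "k \<ge> 2"
  shows "depth_coeff k 0 j = (if j = 0 then 1 else 0)"
  using assms Fneg_0[OF assms] coeff_Fneg_nonzeroD[OF assms, of j j]
  unfolding depth_coeff_def by (auto simp: coeff_1)

lemma depth_coeff_rec: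
  assumes k: "k \<ge> 2" and t: "t \<ge> 1"
  shows "depth_coeff k t j =
           (if k \<le> j then depth_coeff k t (j - k) else 0) + depth_coeff k (t - 1) j
           - (if j = 0 then 0 else depth_coeff k (t - 1) (j - 1))"
proof (cases "t = 1 \<and> j = 0")
  case True
  then show ?thesis
    using Fneg_0[OF k] Fneg_k[OF k] k unfolding depth_coeff_def by simp
next
  case False
  have "k * 1 \<le> k * t" using t by (rule mult_le_mono2)
  moreover have "t \<ge> 2 \<Longrightarrow> k * 2 \<le> k * t" by (rule mult_le_mono2)
  ultimately have m: "j + k * t \<ge> k + 1" using False k t by linarith
  have "j + k * t - k = j + k * (t - 1)" "k \<le> j \<Longrightarrow> j + k * t - k = j - k + k * t"
    "j \<noteq> 0 \<Longrightarrow> j + k * t - k - 1 = j - 1 + k * (t - 1)"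
    using t by (simp_all add: algebra_simps right_diff_distrib')
  then show ?thesis
    using coeff_Fneg_rec[OF k m, of j] unfolding depth_coeff_def by auto
qed

lemma depth_coeff_Suc_eq_sum:
  assumes k: "k \<ge> 2" and b: "b < k"
  shows "depth_coeff k (Suc t) (k * a + b) =
           (\<Sum>i\<le>a. depth_coeff k t (k * i + b)
                    - (if k * i + b = 0 then 0 else depth_coeff k t (k * i + b - 1)))"
proof (induction a)
  case 0
  then show ?case using depth_coeff_rec[OF k, of "Suc t" b] b by simp
next
  case (Suc a)
  then show ?case
    using depth_coeff_rec[OF k, of "Suc t" "k * Suc a + b"] by (simp add: add_ac)
qed

lemma depth_coeff_1:
  assumes k: "k \<ge> 2" and b: "b < k"
  shows "depth_coeff k 1 (k * a + b) = (-1) ^ b * int (1 choose b)"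
proof -
  define f where "f i = depth_coeff k 0 (k * i + b)
                     - (if k * i + b = 0 then 0 else depth_coeff k 0 (k * i + b - 1))" for i
  have "f i = 0" if "i \<in> {1..a}" for i
  proof -
    have "k * 1 \<le> k * i" using that by (intro mult_le_mono2) simp
    then have "k * i + b \<noteq> 0" "k * i + b - 1 \<noteq> 0" using k by linarith+
    then show ?thesis unfolding f_def depth_coeff_0[OF k] by simp
  qed
  then have "(\<Sum>i\<le>a. f i) = f 0"
    by (simp add: atMost_atLeast0 sum.atLeast_Suc_atMost)
  moreover have "f 0 = (-1) ^ b * int (1 choose b)"
    unfolding f_def depth_coeff_0[OF k] by (cases b) (auto simp: numeral_2_eq_2)
  ultimately show ?thesis
    using depth_coeff_Suc_eq_sum[OF k b, of 0 a] unfolding f_def by simp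
qed

lemma depth_coeff_closed_form:
  assumes k: "k \<ge> 2" and "1 \<le> t" "t \<le> k" "b < k" "t < k \<or> 1 \<le> b"
  shows "depth_coeff k t (k * a + b) = (-1) ^ b * int (t choose b) * int ((t - 1 + a) choose a)"
  using assms(2-)
proof (induction t arbitrary: a b rule: nat_induct_at_least)
  case base
  then show ?case using depth_coeff_1[OF k] by simp
next
  case (Suc t)
  have IH: "depth_coeff k t (k * i + c) = (-1) ^ c * int (t choose c) * int ((t - 1 + i) choose i)"
    if "c < k" for i c
    using Suc.IH[of c i] Suc.prems(1) that by simp
  have diff: "depth_coeff k t (k * i + b) - (if k * i + b = 0 then 0 else depth_coeff k t (k * i + b - 1))
      = (-1) ^ b * int (Suc t choose b) * int ((t - 1 + i) choose i)" for i
  proof (cases b)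
    case 0
    have "t choose (k - 1) = 0" using Suc.prems 0 by simp
    then have "i \<noteq> 0 \<Longrightarrow> depth_coeff k t (k * i - 1) = 0"
      using IH[of "k - 1" "i - 1"] k by (simp add: algebra_simps)
    then show ?thesis using IH[of 0 i] k 0 by simp
  next
    case (Suc c)
    then show ?thesis using IH[of b i] IH[of c i] Suc.prems by (simp add: algebra_simps)
  qed
  have "depth_coeff k (Suc t) (k * a + b)
      = (-1) ^ b * int (Suc t choose b) * (\<Sum>i\<le>a. int ((t - 1 + i) choose i))"
    unfolding depth_coeff_Suc_eq_sum[OF k Suc.prems(2)] diff by (simp add: sum_distrib_left)
  also have "(\<Sum>i\<le>a. int ((t - 1 + i) choose i)) = int ((Suc t - 1 + a) choose a)"
    using Suc.hyps unfolding of_nat_sum[symmetric] sum_choose_lower by simp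
  finally show ?case .
qed

text \<open>The case \<open>t = k, b = 0\<close> missing from the closed form, for \<open>k = 2\<close>.\<close>
lemma depth_coeff_2_2_even: "depth_coeff 2 2 (2 * a) = 2 * int a + 1"
proof (induction a)
  case 0
  then show ?case using depth_coeff_rec[of 2 2 0] depth_coeff_1[of 2 0 0] by simp
next
  case (Suc a)
  have "depth_coeff 2 2 (2 * Suc a) = depth_coeff 2 2 (2 * a) + depth_coeff 2 1 (2 * Suc a + 0)
      - depth_coeff 2 1 (2 * a + 1)"
    using depth_coeff_rec[of 2 2 "2 * Suc a"] by simp
  then show ?case using Suc depth_coeff_1[of 2 0 "Suc a"] depth_coeff_1[of 2 1 a] by simp
qed

lemma coeff_Fneg_gap:
  assumes k: "k \<ge> 2" and i: "e < i" "i < e + k"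
  shows "coeff (Fneg k (e + k * t)) i = 0"
proof (rule ccontr)
  assume "coeff (Fneg k (e + k * t)) i \<noteq> 0"
  then obtain s where "e + k * t = i + k * s"
    using coeff_Fneg_nonzeroD[OF k] by blast
  then have "k * s < k * t" "k * t < k * Suc s" using i unfolding mult_Suc_right by linarith+
  then have "s < t" "t < Suc s" by (meson mult_less_cancel1)+
  then show False by simp
qed

lemma coeff_Fneg_above_degree:
  assumes k: "k \<ge> 2" and r: "r < k" and Q: "max 1 r \<le> Q" and i: "k * Q + r - k * max 1 r < i"
  shows "coeff (Fneg k (k * Q + r)) i = 0"
proof (rule ccontr)
  assume nz: "coeff (Fneg k (k * Q + r)) i \<noteq> 0"
  have "k * 1 \<le> k * Q" using Q by (intro mult_le_mono2) simp
  with k nz obtain s where m: "k * Q + r = i + k * s" and s: "s \<ge> 1"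
    using coeff_Fneg_nonzeroD[OF k nz] by auto
  then have "k * s < k * max 1 r" using i by linarith
  then have "s < r" "s \<le> Q" using s Q by auto
  have i_eq: "i = k * (Q - s) + r"
    using m \<open>s \<le> Q\<close> by (simp add: diff_mult_distrib2)
  have "coeff (Fneg k (k * Q + r)) i = depth_coeff k s (k * (Q - s) + r)"
    unfolding depth_coeff_def i_eq[symmetric] m ..
  also have "\<dots> = 0"
    using depth_coeff_closed_form[OF k s, of r "Q - s"] \<open>s < r\<close> r by simp
  finally show False using nz by simp
qed

lemma coeff_Fneg_degree:
  assumes k: "k \<ge> 2" and r: "r < k" and Q: "max 1 r \<le> Q"
  shows "coeff (Fneg k (k * Q + r)) (k * Q + r - k * max 1 r)
           = (-1) ^ r * int ((Q - 1) choose (Q - max 1 r))"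
proof -
  define t where "t = max 1 r"
  have "k * (Q - t) = k * Q - k * t" by (simp add: diff_mult_distrib2)
  moreover have "k * t \<le> k * Q" using Q unfolding t_def by (rule mult_le_mono2)
  ultimately have e: "k * Q + r - k * t = k * (Q - t) + r" and m: "k * Q + r = k * (Q - t) + r + k * t"
    by linarith+
  have "coeff (Fneg k (k * Q + r)) (k * Q + r - k * t) = depth_coeff k t (k * (Q - t) + r)"
    unfolding e depth_coeff_def m[symmetric] ..
  also have "\<dots> = (-1) ^ r * int (t choose r) * int ((t - 1 + (Q - t)) choose (Q - t))"
    by (rule depth_coeff_closed_form) (use k r in \<open>auto simp: t_def\<close>)
  also have "\<dots> = (-1) ^ r * int ((Q - 1) choose (Q - t))"
    using Q unfolding t_def by (cases "r = 0") (auto simp: max_def)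
  finally show ?thesis unfolding t_def .
qed

lemma degree_Fneg:
  assumes k: "k \<ge> 2" and r: "r < k" and Q: "max 1 r \<le> Q"
  shows "degree (Fneg k (k * Q + r)) = k * Q + r - k * max 1 r"
proof (rule antisym)
  show "degree (Fneg k (k * Q + r)) \<le> k * Q + r - k * max 1 r"
    by (rule degree_le) (use coeff_Fneg_above_degree[OF assms] in blast)
  have "coeff (Fneg k (k * Q + r)) (k * Q + r - k * max 1 r) \<noteq> 0"
    unfolding coeff_Fneg_degree[OF assms] using Q by simp
  then show "k * Q + r - k * max 1 r \<le> degree (Fneg k (k * Q + r))"
    by (rule le_degree)
qed

lemma coeff_Fneg_second_dvd:
  assumes k: "k \<ge> 2" and Q: "Q \<ge> 2"
  shows "coeff (Fneg k (k * Q)) (k * Q - 2 * k) = (if k = 2 then 2 * int Q - 3 else int Q - 1)"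
proof -
  have e: "k * Q - 2 * k = k * (Q - 2) + 0" and m: "k * Q = k * (Q - 2) + 0 + k * 2"
    using Q by (simp_all add: diff_mult_distrib2 add_mult_distrib2[symmetric])
  have "coeff (Fneg k (k * Q)) (k * Q - 2 * k) = depth_coeff k 2 (k * (Q - 2) + 0)"
    unfolding e depth_coeff_def m[symmetric] ..
  also have "\<dots> = (if k = 2 then 2 * int Q - 3 else int Q - 1)"
  proof (cases "k = 2")
    case True
    then show ?thesis using depth_coeff_2_2_even[of "Q - 2"] Q by (simp add: of_nat_diff)
  next
    case False
    then show ?thesis using depth_coeff_closed_form[OF k, of 2 0 "Q - 2"] k Q by (simp add: of_nat_diff)
  qed
  finally show ?thesis .
qed

lemma coeff_Fneg_second:
  assumes k: "k \<ge> 2" and r: "1 \<le> r" "r < k" and Q: "r + 1 \<le> Q"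
  shows "coeff (Fneg k (k * Q + r)) (k * Q + r - k * (r + 1))
           = (-1) ^ r * int (r + 1) * int ((Q - 1) choose r)"
proof -
  have "k * (Q - (r + 1)) = k * Q - k * (r + 1)" by (simp add: diff_mult_distrib2)
  moreover have "k * (r + 1) \<le> k * Q" using Q by (rule mult_le_mono2)
  ultimately have e: "k * Q + r - k * (r + 1) = k * (Q - (r + 1)) + r"
    and m: "k * Q + r = k * (Q - (r + 1)) + r + k * (r + 1)" by linarith+
  have "coeff (Fneg k (k * Q + r)) (k * Q + r - k * (r + 1)) = depth_coeff k (r + 1) (k * (Q - (r + 1)) + r)"
    unfolding e depth_coeff_def m[symmetric] ..
  also have "\<dots> = (-1) ^ r * int (r + 1) * int ((Q - 1) choose (Q - 1 - r))"
    using depth_coeff_closed_form[OF k, of "r + 1" r "Q - (r + 1)"] r Q by simp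
  also have "(Q - 1) choose (Q - 1 - r) = (Q - 1) choose r"
    using binomial_symmetric[of r "Q - 1"] Q by simp
  finally show ?thesis .
qed

theorem mainTheorem11:
  fixes k q r :: nat and n :: int
  assumes "k \<ge> 2" and "n \<le> 0"
    and "q = (nat (- n) + 1) div k" and "r = (nat (- n) + 1) mod k"
  shows "(r = 0 \<and> q \<ge> 2 \<longrightarrow>
            coeff (Fpoly k n) (nat (- n) + 1 - 2 * k) =
              (if k = 2 then 2 * int q - 3 else int q - 1)
          \<and> degree (Fpoly k n) = (nat (- n) + 1 - 2 * k) + k
          \<and> (\<forall>i. nat (- n) + 1 - 2 * k < i \<and> i < degree (Fpoly k n)
                 \<longrightarrow> coeff (Fpoly k n) i = 0))
       \<and> (1 \<le> r \<and> r \<le> k - 1 \<and> q \<ge> r + 1 \<longrightarrow>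
            coeff (Fpoly k n) (nat (- n) + 1 - k * (r + 1)) =
              (-1) ^ r * int (r + 1) * int ((q - 1) choose r)
          \<and> degree (Fpoly k n) = (nat (- n) + 1 - k * (r + 1)) + k
          \<and> (\<forall>i. nat (- n) + 1 - k * (r + 1) < i \<and> i < degree (Fpoly k n)
                 \<longrightarrow> coeff (Fpoly k n) i = 0))"
proof -
  have k: "k \<ge> 2" and rk: "r < k" using assms(1,4) by simp_all
  define m where "m = nat (- n) + 1"
  have Fn: "Fpoly k n = Fneg k m" using assms(2) unfolding m_def by simp
  have m: "m = k * q + r" using assms(3,4) unfolding m_def by simp
  show ?thesis
    unfolding m_def[symmetric] Fn
  proof (intro conjI impI)
    assume "r = 0 \<and> 2 \<le> q"
    then have r: "r = 0" and q: "q \<ge> 2" by simp_all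
    have gap: "m = (m - 2 * k) + k * 2"
      using q m r by (simp add: mult_le_mono2)
    show "coeff (Fneg k m) (m - 2 * k) = (if k = 2 then 2 * int q - 3 else int q - 1)"
      using coeff_Fneg_second_dvd[OF k q] m r by simp
    show deg: "degree (Fneg k m) = m - 2 * k + k"
      using degree_Fneg[OF k rk, of q] m r q by (simp add: diff_mult_distrib2)
    show "\<forall>i. m - 2 * k < i \<and> i < degree (Fneg k m) \<longrightarrow> coeff (Fneg k m) i = 0"
      using coeff_Fneg_gap[OF k, of "m - 2 * k" _ 2] gap deg by auto
  next
    assume "1 \<le> r \<and> r \<le> k - 1 \<and> r + 1 \<le> q"
    then have r: "1 \<le> r" and q: "r + 1 \<le> q" by simp_all
    have "k * (r + 1) \<le> k * q" using q by (rule mult_le_mono2)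
    then have gap: "m = (m - k * (r + 1)) + k * (r + 1)" using m by simp
    show "coeff (Fneg k m) (m - k * (r + 1)) = (-1) ^ r * int (r + 1) * int ((q - 1) choose r)"
      using coeff_Fneg_second[OF k r rk q] m by simp
    show deg: "degree (Fneg k m) = m - k * (r + 1) + k"
      using degree_Fneg[OF k rk, of q] m r q \<open>k * (r + 1) \<le> k * q\<close> by (simp add: algebra_simps)
    show "\<forall>i. m - k * (r + 1) < i \<and> i < degree (Fneg k m) \<longrightarrow> coeff (Fneg k m) i = 0"
      using coeff_Fneg_gap[OF k, of "m - k * (r + 1)" _ "r + 1"] gap deg by auto
  qed
qed

end
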